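(* Let $\mathcal G=(\mathcal V,\mathcal E)$ be a finite digraph with vertices $v_1,\dots,v_N$ and finite digraph diameter $D$, and run the synchronous dynamics described in the context. For each $i$ let $\tau_i=\min\{k\ge 1: w_i[k]=\text{True}\}$ be the number of iterations after which vertex $v_i$ stops (the first step at which $y_i$ does not change). Then the algorithm converges in $D+1$ iterations, i.e. $\max_{1\le i\le N}\tau_i=D+1$ (equivalently $\min\{k\ge1: w_i[k]=\text{True for all } i\}=D+1$), and hence $D=\max_{1\le i\le N}\tau_i-1$.
   Context: For $v\in\mathcal V$, $\mathcal N^-_{v}=\{u:(u,v)\in\mathcal E\}$ is the set of in-neighbors of $v$. The finite digraph diameter $D$ is the maximum, over all ordered pairs $(u,v)$ of vertices such that a directed path from $u$ to $v$ exists, of the number of edges of a shortest directed path from $u$ to $v$ (with distance $0$ when $u=v$). The dynamics are run synchronously by all vertices at every time step $k=0,1,2,\dots$: initialize $x_i[0]=\{v_i\}$, $y_i[0]=1$, $z_i[0]=\emptyset$, $w_i[0]=\text{False}$, and for $k\ge 0$ set $x_i[k+1]=\bigcup_{v_j\in\mathcal N^-_{v_i}\cup\{v_i\}}x_j[k]$; $y_i[k+1]=\max\{\max_{v_j\in\mathcal N^-_{v_i}}|x_j[k]|,\ |x_i[k+1]|\}$ (the inner maximum is omitted if $\mathcal N^-_{v_i}=\emptyset$); $z_i[k+1]=\{v_j:\ y_i[k+1]=y_j[k]\ \text{and}\ v_j\in\bigcup_{v_l\in\mathcal N^-_{v_i}\cup\{v_i\}}x_l[k]\}$; $w_i[k+1]=\text{True}$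 if $y_i[k+1]=y_i[k]$ and False otherwise. *)

theory Defs
  imports Main
begin

definition in_nbrs :: "'a rel \<Rightarrow> 'a \<Rightarrow> 'a set" where
  "in_nbrs E v = {u. (u, v) \<in> E}"

definition dist :: "'a rel \<Rightarrow> 'a \<Rightarrow> 'a \<Rightarrow> nat" where
  "dist E u v = (LEAST n. (u, v) \<in> E ^^ n)"

definition diam :: "'a set \<Rightarrow> 'a rel \<Rightarrow> nat" where
  "diam V E = Max {dist E u v | u v. u \<in> V \<and> v \<in> V \<and> (u, v) \<in> E\<^sup>*}"

fun xs :: "'a rel \<Rightarrow> nat \<Rightarrow> 'a \<Rightarrow> 'a set" where
  "xs E 0 i = {i}"
| "xs E (Suc k) i = \<Union> (xs E k ` (in_nbrs E i \<union> {i}))"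

fun ys :: "'a rel \<Rightarrow> nat \<Rightarrow> 'a \<Rightarrow> nat" where
  "ys E 0 i = 1"
| "ys E (Suc k) i =
     (if in_nbrs E i = {} then card (xs E (Suc k) i)
      else max (Max ((\<lambda>j. card (xs E k j)) ` in_nbrs E i)) (card (xs E (Suc k) i)))"

fun zs :: "'a rel \<Rightarrow> nat \<Rightarrow> 'a \<Rightarrow> 'a set" where
  "zs E 0 i = {}"
| "zs E (Suc k) i = {j. ys E (Suc k) i = ys E k j \<and> j \<in> \<Union> (xs E k ` (in_nbrs E i \<union> {i}))}"

fun ws :: "'a rel \<Rightarrow> nat \<Rightarrow> 'a \<Rightarrow> bool" where
  "ws E 0 i = False"
| "ws E (Suc k) i = (ys E (Suc k) i = ys E k i)"

definition tau :: "'a rel \<Rightarrow> 'a \<Rightarrow> nat" where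
  "tau E i = (LEAST k. k \<ge> 1 \<and> ws E k i)"

end

theory Submission
  imports Defs
begin

text \<open>
  x_i[k] is the set of vertices with a directed walk of length at most k to v_i,
  and since the in-neighbours' sets x_j[k] are contained in x_i[k+1], y_i[k] = |x_i[k]|.
  Hence w_i[k+1] holds iff the ball x_i[k] stops growing, which happens exactly when k reaches
  the in-eccentricity of v_i (the largest distance from a vertex that reaches v_i). So
  tau_i is the in-eccentricity plus one, and the maximum of the in-eccentricities is the diameter.
\<close>

lemma xs_eq_relpow_within: "xs E k i = {u. \<exists>n\<le>k. (u, i) \<in> E ^^ n}"
proof (induction k arbitrary: i)
  case 0
  then show ?case by auto
next
  case (Suc k)
  have "(\<exists>n\<le>Suc k. (u, i) \<in> E ^^ n) \<longleftrightarrow>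
        (\<exists>j\<in>in_nbrs E i \<union> {i}. \<exists>n\<le>k. (u, j) \<in> E ^^ n)" for u
  proof
    assume "\<exists>n\<le>Suc k. (u, i) \<in> E ^^ n"
    then obtain n where n: "n \<le> Suc k" "(u, i) \<in> E ^^ n" by blast
    show "\<exists>j\<in>in_nbrs E i \<union> {i}. \<exists>n\<le>k. (u, j) \<in> E ^^ n"
    proof (cases n)
      case 0
      with n show ?thesis by (auto intro!: exI[of _ 0])
    next
      case (Suc m)
      with n obtain j where "(u, j) \<in> E ^^ m" "(j, i) \<in> E" "m \<le> k" by auto
      then show ?thesis by (auto simp: in_nbrs_def)
    qed
  next
    assume "\<exists>j\<in>in_nbrs E i \<union> {i}. \<exists>n\<le>k. (u, j) \<in> E ^^ n"
    then obtain j n where j: "j \<in> in_nbrs E i \<union> {i}" and n: "n \<le> k" "(u, j) \<in> E ^^ n"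
      by blast
    show "\<exists>n\<le>Suc k. (u, i) \<in> E ^^ n"
    proof (cases "j = i")
      case True
      with n show ?thesis by (auto intro: le_SucI)
    next
      case False
      with j n have "(u, i) \<in> E ^^ Suc n" by (auto simp: in_nbrs_def)
      with n show ?thesis by (auto intro!: exI[of _ "Suc n"])
    qed
  qed
  then show ?case unfolding Suc.IH xs.simps by blast
qed

lemma xs_subset_xs_Suc: "xs E k i \<subseteq> xs E (Suc k) i"
  unfolding xs_eq_relpow_within by (auto intro: le_SucI)

lemma xs_subset_rtrancl: "xs E k i \<subseteq> {u. (u, i) \<in> E\<^sup>*}"
  unfolding xs_eq_relpow_within by (auto simp: rtrancl_power)

lemma rtrancl_source_in_vertices:
  assumes "E \<subseteq> V \<times> V" "(u, i) \<in> E\<^sup>*"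
  shows "u \<in> insert i V"
  using assms(2) by (cases rule: converse_rtranclE) (use assms(1) in auto)

lemma finite_rtrancl_sources:
  assumes "finite V" "E \<subseteq> V \<times> V"
  shows "finite {u. (u, i) \<in> E\<^sup>*}"
  using rtrancl_source_in_vertices[OF assms(2)] assms(1)
  by (auto intro: finite_subset[of _ "insert i V"])

lemma finite_xs:
  assumes "finite V" "E \<subseteq> V \<times> V"
  shows "finite (xs E k i)"
  using finite_rtrancl_sources[OF assms] xs_subset_rtrancl by (rule finite_subset[rotated])

lemma ys_eq_card_xs:
  assumes "finite V" "E \<subseteq> V \<times> V"
  shows "ys E k i = card (xs E k i)"
proof (cases k)
  case (Suc m)
  have "card (xs E m j) \<le> card (xs E (Suc m) i)" if "j \<in> in_nbrs E i" for j
    using that by (intro card_mono finite_xs[OF assms]) auto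
  moreover have "finite (in_nbrs E i)"
    using assms by (auto simp: in_nbrs_def intro: finite_subset[of _ V])
  ultimately show ?thesis using Suc by (auto simp: max_def)
qed simp

lemma ws_Suc_iff_xs_stable:
  assumes "finite V" "E \<subseteq> V \<times> V"
  shows "ws E (Suc k) i \<longleftrightarrow> xs E (Suc k) i = xs E k i"
  using ys_eq_card_xs[OF assms] xs_subset_xs_Suc[of E k i] finite_xs[OF assms]
  by (metis card_subset_eq ws.simps(2))

lemma relpow_dist:
  assumes "(u, i) \<in> E\<^sup>*"
  shows "(u, i) \<in> E ^^ dist E u i"
  using assms unfolding dist_def by (metis LeastI rtrancl_power)

lemma dist_le_relpow:
  assumes "(u, i) \<in> E ^^ n"
  shows "dist E u i \<le> n"
  using assms unfolding dist_def by (rule Least_le)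

definition in_ecc :: "'a rel \<Rightarrow> 'a \<Rightarrow> nat" where
  "in_ecc E i = Max ((\<lambda>u. dist E u i) ` {u. (u, i) \<in> E\<^sup>*})"

lemma dist_le_in_ecc:
  assumes "finite V" "E \<subseteq> V \<times> V" "(u, i) \<in> E\<^sup>*"
  shows "dist E u i \<le> in_ecc E i"
  unfolding in_ecc_def using finite_rtrancl_sources[OF assms(1,2)] assms(3) by auto

lemma in_ecc_attained:
  assumes "finite V" "E \<subseteq> V \<times> V"
  obtains u where "(u, i) \<in> E\<^sup>*" "dist E u i = in_ecc E i"
proof -
  have "(i, i) \<in> E\<^sup>*" by simp
  then have "in_ecc E i \<in> (\<lambda>u. dist E u i) ` {u. (u, i) \<in> E\<^sup>*}"
    unfolding in_ecc_def using finite_rtrancl_sources[OF assms] by (intro Max_in) auto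
  then show ?thesis using that by auto
qed

lemma xs_stable_iff_in_ecc_le:
  assumes "finite V" "E \<subseteq> V \<times> V"
  shows "xs E (Suc k) i = xs E k i \<longleftrightarrow> in_ecc E i \<le> k"
proof
  assume "in_ecc E i \<le> k"
  have "u \<in> xs E k i" if "u \<in> xs E (Suc k) i" for u
  proof -
    from that have "(u, i) \<in> E\<^sup>*" using xs_subset_rtrancl[of E "Suc k" i] by blast
    moreover from this have "dist E u i \<le> k"
      using dist_le_in_ecc[OF assms] \<open>in_ecc E i \<le> k\<close> by (meson le_trans)
    ultimately have "(u, i) \<in> E ^^ dist E u i" "dist E u i \<le> k"
      using relpow_dist by auto
    then show ?thesis unfolding xs_eq_relpow_within by blast
  qed
  then show "xs E (Suc k) i = xs E k i" using xs_subset_xs_Suc[of E k i] by blast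
next
  assume stable: "xs E (Suc k) i = xs E k i"
  show "in_ecc E i \<le> k"
  proof (rule ccontr)
    assume "\<not> in_ecc E i \<le> k"
    then obtain d where d: "in_ecc E i = d + Suc k"
      using less_imp_Suc_add[of k "in_ecc E i"] by auto
    obtain u where u: "(u, i) \<in> E\<^sup>*" "dist E u i = in_ecc E i"
      using in_ecc_attained[OF assms] .
    \<comment> \<open>the vertex at distance k+1 from i on a shortest walk would already lie in x_i[k]\<close>
    have "(u, i) \<in> E ^^ (d + Suc k)"
      using relpow_dist[OF u(1)] u(2) d by simp
    then obtain w where w: "(u, w) \<in> E ^^ d" "(w, i) \<in> E ^^ Suc k"
      unfolding relpow_add by blast
    then have "w \<in> xs E (Suc k) i" unfolding xs_eq_relpow_within by blast
    then have "w \<in> xs E k i" by (simp only: stable)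
    then obtain n where n: "n \<le> k" "(w, i) \<in> E ^^ n" unfolding xs_eq_relpow_within by blast
    with w have "(u, i) \<in> E ^^ (d + n)" unfolding relpow_add by blast
    then have "dist E u i \<le> d + n" by (rule dist_le_relpow)
    with u(2) d n(1) show False by linarith
  qed
qed

lemma ws_iff_in_ecc_less:
  assumes "finite V" "E \<subseteq> V \<times> V" "k \<ge> 1"
  shows "ws E k i \<longleftrightarrow> in_ecc E i < k"
proof -
  obtain m where "k = Suc m" using assms(3) by (cases k) auto
  then show ?thesis
    using ws_Suc_iff_xs_stable[OF assms(1,2)] xs_stable_iff_in_ecc_le[OF assms(1,2)] by auto
qed

lemma tau_eq_in_ecc_Suc:
  assumes "finite V" "E \<subseteq> V \<times> V"
  shows "tau E i = Suc (in_ecc E i)"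
  unfolding tau_def
  by (rule Least_equality) (auto simp: ws_iff_in_ecc_less[OF assms] simp del: ws.simps)

lemma diam_eq_Max_in_ecc:
  assumes "finite V" "V \<noteq> {}" "E \<subseteq> V \<times> V"
  shows "diam V E = Max (in_ecc E ` V)"
  unfolding diam_def
proof (rule Max_eqI)
  show "finite {dist E u v | u v. u \<in> V \<and> v \<in> V \<and> (u, v) \<in> E\<^sup>*}"
    using assms(1) by (auto intro: finite_subset[of _ "(\<lambda>(u, v). dist E u v) ` (V \<times> V)"])
  show "d \<le> Max (in_ecc E ` V)"
    if "d \<in> {dist E u v | u v. u \<in> V \<and> v \<in> V \<and> (u, v) \<in> E\<^sup>*}" for d
    using that dist_le_in_ecc[OF assms(1,3)] assms(1) by (fastforce intro: Max.coboundedI le_trans)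
  obtain v where v: "v \<in> V" "in_ecc E v = Max (in_ecc E ` V)"
    using Max_in[of "in_ecc E ` V"] assms(1,2) by (metis finite_imageI image_iff image_is_empty)
  obtain u where u: "(u, v) \<in> E\<^sup>*" "dist E u v = in_ecc E v"
    using in_ecc_attained[OF assms(1,3)] .
  have "u \<in> V" using rtrancl_source_in_vertices[OF assms(3) u(1)] v(1) by auto
  then show "Max (in_ecc E ` V) \<in> {dist E u v | u v. u \<in> V \<and> v \<in> V \<and> (u, v) \<in> E\<^sup>*}"
    using u v by (metis (mono_tags, lifting) mem_Collect_eq)
qed

lemma Max_tau_eq_diam_Suc:
  assumes "finite V" "V \<noteq> {}" "E \<subseteq> V \<times> V"
  shows "Max (tau E ` V) = Suc (diam V E)"
proof -
  have "tau E ` V = Suc ` in_ecc E ` V"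
    using tau_eq_in_ecc_Suc[OF assms(1,3)] by (simp add: image_image)
  then show ?thesis
    using assms(1,2)
    by (simp add: diam_eq_Max_in_ecc[OF assms] mono_Max_commute[symmetric] mono_Suc)
qed

lemma all_ws_iff_diam_less:
  assumes "finite V" "V \<noteq> {}" "E \<subseteq> V \<times> V" "k \<ge> 1"
  shows "(\<forall>i\<in>V. ws E k i) \<longleftrightarrow> diam V E < k"
  using assms(1,2) by (simp add: ws_iff_in_ecc_less[OF assms(1,3,4)] diam_eq_Max_in_ecc[OF assms(1-3)]
      del: ws.simps)

theorem theorem3:
  fixes V :: "'a set" and E :: "'a rel"
  assumes "finite V" and "V \<noteq> {}" and "E \<subseteq> V \<times> V"
  shows "Max (tau E ` V) = diam V E + 1
         \<and> (LEAST k. k \<ge> 1 \<and> (\<forall>i\<in>V. ws E k i)) = diam V E + 1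
         \<and> diam V E = Max (tau E ` V) - 1"
proof -
  have "(LEAST k. k \<ge> 1 \<and> (\<forall>i\<in>V. ws E k i)) = diam V E + 1"
    by (rule Least_equality) (auto simp: all_ws_iff_diam_less[OF assms] simp del: ws.simps)
  then show ?thesis using Max_tau_eq_diam_Suc[OF assms] by simp
qed

end
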